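(* On the round sphere $\mathbb{S}^3$, let $\Phi=[\tilde u,1]$ (a Killing spinor with $\nabla_X\Phi=\tfrac12X\cdot\Phi$), let $V$ be a vector field and $\alpha$ a smooth function, and set $\Psi:=V\cdot\Phi+\alpha\Phi$. Then $\Psi$ is a generalized Killing spinor of unit length if and only if (i) $\alpha^2+|V|^2=1$, (ii) $-V\lrcorner\ast\nabla_VV-V(\alpha)\,V+\alpha\nabla_VV+d\alpha=0$, (iii) $\alpha\ast(V\wedge dV)+(2\alpha-\delta V)(1-\alpha^2)+\alpha V(\alpha)=0$.
   Context: $\mathbb{S}^3\subset\mathbb{H}$ is the unit sphere with round metric, $u(g)=(gi,gj,gk)$ the left-invariant orthonormal frame defining the orientation, $\tilde u$ its lift to the spin bundle, and spinors are written $[\tilde u,f]$ with $f:\mathbb{S}^3\to\mathbb{H}$, Clifford multiplication by $gx$ acting as $f\mapsto xf$. With this convention $X\cdot Y\cdot Z\cdot\Psi=-\Psi$ for any positive orthonormal basis $(X,Y,Z)$, and $\ast X\cdot\Psi=X\cdot\Psi$. Every spinor can be uniquely written as $V\cdot\Phi+\alpha\Phi$. Vectors and $1$-forms are identified via the metric; $\ast$ is the Hodge star, $\delta$ the codifferential (so $\delta V=-\mathrm{div}V$), $dV$ the exterior derivative of the $1$-form dual to $V$, $\lrcorner$ the interior product. A generalized Killing spinor is $\Psi$ with $\nabla_X\Psi=A(X)\cdot\Psi$ for all $X$ for some symmetric endomorphism field $A$. *)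

theory Defs
  imports "HOL-Analysis.Analysis"
begin

section \<open>Quaternions H = R x R^3 (real part, imaginary part)\<close>

type_synonym quat = "real \<times> (real^3)"

definition qmul :: "quat \<Rightarrow> quat \<Rightarrow> quat" where
  "qmul p q = (fst p * fst q - snd p \<bullet> snd q,
               fst p *\<^sub>R snd q + fst q *\<^sub>R snd p + cross3 (snd p) (snd q))"

definition qconj :: "quat \<Rightarrow> quat" where
  "qconj p = (fst p, - snd p)"

definition qone :: quat where "qone = (1, 0)"

definition qof_real :: "real \<Rightarrow> quat" where "qof_real r = (r, 0)"

definition qi :: quat where "qi = (0, axis 1 1)"
definition qj :: quat where "qj = (0, axis 2 1)"
definition qk :: quat where "qk = (0, axis 3 1)"

definition S3 :: "quat set" where "S3 = sphere 0 1"

fun iter_deriv :: "('a::real_normed_vector \<Rightarrow> 'b::real_normed_vector) \<Rightarrow> 'a list \<Rightarrow> 'a \<Rightarrow> 'b" where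
  "iter_deriv F [] = F"
| "iter_deriv F (w # ws) = (\<lambda>x. frechet_derivative (iter_deriv F ws) (at x) w)"

definition smooth_fun :: "('a::real_normed_vector \<Rightarrow> 'b::real_normed_vector) \<Rightarrow> bool" where
  "smooth_fun F \<longleftrightarrow> (\<forall>ws x. iter_deriv F ws differentiable (at x))"

definition tangent :: "quat \<Rightarrow> quat \<Rightarrow> bool" where
  "tangent g X \<longleftrightarrow> X \<bullet> g = 0"

definition dderiv :: "(quat \<Rightarrow> 'b::real_normed_vector) \<Rightarrow> quat \<Rightarrow> quat \<Rightarrow> 'b" where
  "dderiv F g X = frechet_derivative F (at g) X"

definition tproj :: "quat \<Rightarrow> quat \<Rightarrow> quat" where
  "tproj g Z = Z - (Z \<bullet> g) *\<^sub>R g"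

text \<open>Levi-Civita connection of the round metric: nabla_X Y at g\<close>
definition lc_nabla :: "(quat \<Rightarrow> quat) \<Rightarrow> quat \<Rightarrow> quat \<Rightarrow> quat" where
  "lc_nabla Y g X = tproj g (dderiv Y g X)"

text \<open>imaginary units i, j, k indexed 0,1,2; left-invariant frame u(g) = (gi, gj, gk)\<close>
definition eps :: "nat \<Rightarrow> quat" where
  "eps a = (if a = 0 then qi else if a = 1 then qj else qk)"

definition Efr :: "nat \<Rightarrow> quat \<Rightarrow> quat" where
  "Efr a g = qmul g (eps a)"

text \<open>Riemannian volume form for the orientation given by the frame u\<close>
definition vol :: "quat \<Rightarrow> quat \<Rightarrow> quat \<Rightarrow> quat \<Rightarrow> real" where
  "vol g X Y Z = cross3 (snd (qmul (qconj g) X)) (snd (qmul (qconj g) Y)) \<bullet> snd (qmul (qconj g) Z)"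

definition vderiv :: "(quat \<Rightarrow> quat) \<Rightarrow> (quat \<Rightarrow> real) \<Rightarrow> quat \<Rightarrow> real" where
  "vderiv V f g = dderiv f g (V g)"

text \<open>d alpha, identified with a vector via the metric (gradient on S^3)\<close>
definition dfun :: "(quat \<Rightarrow> real) \<Rightarrow> quat \<Rightarrow> quat" where
  "dfun f g = (\<Sum>a<3. dderiv f g (Efr a g) *\<^sub>R Efr a g)"

text \<open>exterior derivative of the 1-form dual to V: a 2-form at g\<close>
definition dvf :: "(quat \<Rightarrow> quat) \<Rightarrow> quat \<Rightarrow> quat \<Rightarrow> quat \<Rightarrow> real" where
  "dvf V g X Y = lc_nabla V g X \<bullet> Y - lc_nabla V g Y \<bullet> X"

text \<open>codifferential delta V = - div V\<close>
definition codiff :: "(quat \<Rightarrow> quat) \<Rightarrow> quat \<Rightarrow> real" where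
  "codiff V g = - (\<Sum>a<3. lc_nabla V g (Efr a g) \<bullet> Efr a g)"

text \<open>Hodge star of a 1-form W (identified with vector) at g: a 2-form\<close>
definition hodge1 :: "quat \<Rightarrow> quat \<Rightarrow> quat \<Rightarrow> quat \<Rightarrow> real" where
  "hodge1 g W X Y = vol g W X Y"

definition hodge3 :: "quat \<Rightarrow> (quat \<Rightarrow> quat \<Rightarrow> quat \<Rightarrow> real) \<Rightarrow> real" where
  "hodge3 g \<gamma> = \<gamma> (Efr 0 g) (Efr 1 g) (Efr 2 g)"

definition wedge12 :: "quat \<Rightarrow> (quat \<Rightarrow> quat \<Rightarrow> real) \<Rightarrow> quat \<Rightarrow> quat \<Rightarrow> quat \<Rightarrow> real" where
  "wedge12 \<theta> \<beta> X Y Z = (\<theta> \<bullet> X) * \<beta> Y Z - (\<theta> \<bullet> Y) * \<beta> X Z + (\<theta> \<bullet> Z) * \<beta> X Y"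

text \<open>interior product of a vector with a 2-form at g, a 1-form identified with a vector\<close>
definition interior2 :: "quat \<Rightarrow> quat \<Rightarrow> (quat \<Rightarrow> quat \<Rightarrow> real) \<Rightarrow> quat" where
  "interior2 g Z \<beta> = (\<Sum>a<3. \<beta> Z (Efr a g) *\<^sub>R Efr a g)"

section \<open>Spinors [u~, f], represented by f : S^3 -> H\<close>

text \<open>Clifford multiplication by a tangent vector X = g x: f |-> x f\<close>
definition cliff :: "quat \<Rightarrow> quat \<Rightarrow> quat \<Rightarrow> quat" where
  "cliff g X f = qmul (qmul (qconj g) X) f"

definition spin_nabla :: "(quat \<Rightarrow> quat) \<Rightarrow> quat \<Rightarrow> quat \<Rightarrow> quat" where
  "spin_nabla \<psi> g X = dderiv \<psi> g X +
     (1/4) *\<^sub>R (\<Sum>a<3. \<Sum>b<3. (lc_nabla (Efr a) g X \<bullet> Efr b g) *\<^sub>R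
                                  cliff g (Efr a g) (cliff g (Efr b g) (\<psi> g)))"

text \<open>the Killing spinor Phi = [u~, 1]\<close>
definition Phi :: "quat \<Rightarrow> quat" where "Phi g = qone"

definition gen_killing :: "(quat \<Rightarrow> quat) \<Rightarrow> bool" where
  "gen_killing \<psi> \<longleftrightarrow> (\<exists>A :: quat \<Rightarrow> quat \<Rightarrow> quat. \<forall>g\<in>S3.
      linear (A g)
    \<and> (\<forall>X. tangent g X \<longrightarrow> tangent g (A g X))
    \<and> (\<forall>X Y. tangent g X \<longrightarrow> tangent g Y \<longrightarrow> A g X \<bullet> Y = X \<bullet> A g Y)
    \<and> (\<forall>X. tangent g X \<longrightarrow> spin_nabla \<psi> g X = cliff g (A g X) (\<psi> g)))"

end

theory Submission
  imports Defs
begin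

(* Everything is computed in the left-invariant frame E_a(g) = g e_a.  A tangent vector at g is
   g (0,x) with x in R^3, V g = g (0,v), the spinor Psi is the quaternion (alpha, v), and the
   spinor connection is nabla_X psi = X(psi) + 1/2 x psi.  At a point the problem becomes linear
   algebra in the data (alpha, v, nabla_{E_a} V = g (0,m_a), d alpha = w):
   - If |Psi| = 1, the only endomorphism A with nabla_X Psi = A(X).Psi is the candidate
     A(x) = Im (nabla_x Psi . conj Psi); it solves the equation because d|Psi|^2 = 0, and it is
     symmetric exactly when an explicit obstruction vector Q(alpha, v, m, w) vanishes.
   - Given (i) and d|Psi|^2 = 0, equation (ii) says v x Q = 0 and equation (iii) says v . Q = 0,
     so (ii) and (iii) are equivalent to Q = 0 wherever V is nonzero.
   - Near a zero of V that is not a limit of non-zeros, V vanishes identically and so does Q;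
     at all other zeros Q = 0 by continuity (V and alpha are smooth). *)

section \<open>Quaternion algebra\<close>

lemmas quat_simps = qmul_def qconj_def cross3_simps inner_prod_def forall_3

lemma S3_iff: "g \<in> S3 \<longleftrightarrow> g \<bullet> g = 1"
  by (simp add: S3_def norm_eq_1)

lemma qmul_assoc: "qmul (qmul p q) r = qmul p (qmul q r)"
  by (simp add: quat_simps)

lemma qconj_qmul: "qconj (qmul p q) = qmul (qconj q) (qconj p)"
  by (simp add: quat_simps)

lemma inner_qmul_left: "(qmul g p) \<bullet> (qmul g q) = (g \<bullet> g) * (p \<bullet> q)"
  by (simp add: quat_simps)

lemma qconj_mul_self: "qmul (qconj g) g = (g \<bullet> g, 0)"
  and qmul_conj_self: "qmul g (qconj g) = (g \<bullet> g, 0)"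
  by (simp_all add: quat_simps)

lemma qmul_real_left: "qmul (r, 0) p = r *\<^sub>R p"
  and qmul_real_right: "qmul p (r, 0) = r *\<^sub>R p"
  by (simp_all add: quat_simps prod_eq_iff)

lemma fst_qmul_qconj: "fst (qmul (qconj g) X) = g \<bullet> X"
  by (simp add: quat_simps)

lemma qone_right [simp]: "qmul p qone = p"
  by (simp add: quat_simps qone_def prod_eq_iff)

lemma qmul_add_right: "qmul p (a + b) = qmul p a + qmul p b"
  and qmul_add_left: "qmul (a + b) p = qmul a p + qmul b p"
  and qmul_diff_right: "qmul p (a - b) = qmul p a - qmul p b"
  and qmul_scaleR_right: "qmul p (r *\<^sub>R a) = r *\<^sub>R qmul p a"
  and qmul_scaleR_left: "qmul (r *\<^sub>R a) p = r *\<^sub>R qmul a p"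
  and qmul_uminus_right: "qmul p (- a) = - qmul p a"
  and qmul_zero_right: "qmul p 0 = 0"
  by (simp_all add: quat_simps prod_eq_iff)

lemma bounded_bilinear_qmul: "bounded_bilinear qmul"
  unfolding bilinear_conv_bounded_bilinear[symmetric] bilinear_def
  by (simp add: linear_iff qmul_add_right qmul_add_left qmul_scaleR_right qmul_scaleR_left)

lemma bounded_linear_qconj: "bounded_linear qconj"
  by (rule linear_conv_bounded_linear[THEN iffD1]) (simp add: linear_iff qconj_def prod_eq_iff)

lemma linear_qmul_left: "linear (qmul g)"
  by (simp add: linear_iff qmul_add_right qmul_scaleR_right)

lemma unit_cancel_left: "g \<bullet> g = 1 \<Longrightarrow> qmul (qconj g) (qmul g p) = p"
  by (simp add: qmul_assoc[symmetric] qconj_mul_self qmul_real_left)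

lemma unit_cancel_right: "g \<bullet> g = 1 \<Longrightarrow> qmul g (qmul (qconj g) p) = p"
  by (simp add: qmul_assoc[symmetric] qmul_conj_self qmul_real_left)

lemma qmul_unit_eq_0: "g \<bullet> g = 1 \<Longrightarrow> qmul g q = 0 \<longleftrightarrow> q = 0"
  by (metis unit_cancel_left qmul_zero_right)

lemma inner_translate: "g \<bullet> g = 1 \<Longrightarrow> qmul g (0, x) \<bullet> qmul g (0, y) = x \<bullet> y"
  unfolding inner_qmul_left by (simp add: inner_prod_def)

lemma inner_qmul_unit: "g \<bullet> g = 1 \<Longrightarrow> (qmul g q) \<bullet> g = fst q"
  using inner_qmul_left[of g q qone] by (simp only: qone_right) (simp add: qone_def inner_prod_def)

lemma tangent_imag:
  assumes gg: "g \<bullet> g = 1" and X: "X \<bullet> g = 0"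
  shows "X = qmul g (0, snd (qmul (qconj g) X))"
proof -
  have "qmul (qconj g) X = (0, snd (qmul (qconj g) X))"
    using X by (simp add: prod_eq_iff fst_qmul_qconj inner_commute)
  then show ?thesis using unit_cancel_right[OF gg, of X] by metis
qed

lemma tangent_iff_translate: "g \<bullet> g = 1 \<Longrightarrow> tangent g X \<longleftrightarrow> (\<exists>x. X = qmul g (0, x))"
  unfolding tangent_def using tangent_imag inner_qmul_unit by fastforce

lemma tproj_qmul_unit: "g \<bullet> g = 1 \<Longrightarrow> tproj g (qmul g q) = qmul g (0, snd q)"
proof -
  assume gg: "g \<bullet> g = 1"
  have "tproj g (qmul g q) = qmul g q - fst q *\<^sub>R g" by (simp add: tproj_def inner_qmul_unit[OF gg])
  also have "\<dots> = qmul g (q - (fst q, 0))" by (simp add: qmul_diff_right qmul_real_right)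
  also have "q - (fst q, 0) = (0, snd q)" by (simp add: prod_eq_iff)
  finally show ?thesis .
qed

section \<open>The left-invariant frame\<close>

definition ax :: "nat \<Rightarrow> real^3" where "ax a = snd (eps a)"

lemma eps_imag: "eps a = (0, ax a)"
  by (simp add: ax_def eps_def qi_def qj_def qk_def prod_eq_iff)

lemma ax_vals [simp]: "ax 0 = axis 1 1" "ax 1 = axis 2 1" "ax (Suc 0) = axis 2 1"
  "ax 2 = axis 3 1" "ax (Suc (Suc 0)) = axis 3 1"
  by (simp_all add: ax_def eps_def qi_def qj_def qk_def)

lemma inner_axis3 [simp]: "x \<bullet> axis 1 1 = x$1" "x \<bullet> axis 2 1 = x$2" "x \<bullet> axis 3 1 = x$3"
  for x :: "real^3"
  by (simp_all add: inner_axis)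

lemma frame_expansion: "qmul g (0, x) = (x$1) *\<^sub>R Efr 0 g + (x$2) *\<^sub>R Efr 1 g + (x$3) *\<^sub>R Efr 2 g"
proof -
  have "(0::real, x) = (x$1) *\<^sub>R eps 0 + (x$2) *\<^sub>R eps 1 + (x$3) *\<^sub>R eps 2"
    by (simp add: eps_def qi_def qj_def qk_def prod_eq_iff vec_eq_iff forall_3 axis_def)
  then show ?thesis by (simp add: Efr_def qmul_add_right qmul_scaleR_right)
qed

lemma Efr_tangent: "g \<bullet> g = 1 \<Longrightarrow> Efr a g \<bullet> g = 0"
  by (simp add: Efr_def inner_qmul_unit eps_imag)

lemma qconj_Efr: "g \<bullet> g = 1 \<Longrightarrow> qmul (qconj g) (Efr a g) = eps a"
  by (simp add: Efr_def unit_cancel_left)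

lemma inner_Efr: "g \<bullet> g = 1 \<Longrightarrow> qmul g (0, m) \<bullet> Efr b g = m \<bullet> ax b"
  unfolding Efr_def eps_imag inner_qmul_left by (simp add: inner_prod_def)

lemma linear_frame_expansion:
  assumes gg: "g \<bullet> g = 1" and X: "X \<bullet> g = 0" and L: "linear L"
  shows "L X = (snd (qmul (qconj g) X) $ 1) *\<^sub>R L (Efr 0 g) + (snd (qmul (qconj g) X) $ 2) *\<^sub>R L (Efr 1 g)
     + (snd (qmul (qconj g) X) $ 3) *\<^sub>R L (Efr 2 g)"
proof -
  have "X = qmul g (0, snd (qmul (qconj g) X))" by (rule tangent_imag[OF gg X])
  then have "L X = L ((snd (qmul (qconj g) X) $ 1) *\<^sub>R Efr 0 g + (snd (qmul (qconj g) X) $ 2) *\<^sub>R Efr 1 g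
     + (snd (qmul (qconj g) X) $ 3) *\<^sub>R Efr 2 g)" by (simp only: frame_expansion)
  then show ?thesis using L by (simp add: linear_add linear_cmul)
qed

lemma deriv_Efr: "dderiv (Efr a) g X = qmul X (eps a)"
proof -
  have "(Efr a has_derivative (\<lambda>X. qmul X (eps a))) (at g)"
    unfolding Efr_def[abs_def]
    by (rule bounded_linear_imp_has_derivative[OF bounded_bilinear.bounded_linear_left[OF bounded_bilinear_qmul]])
  then show ?thesis unfolding dderiv_def using frechet_derivative_at by metis
qed

section \<open>Calculus on S^3\<close>

lemma great_circle_in_S3:
  assumes g: "g \<in> S3" and uu: "u \<bullet> u = 1" and ug: "u \<bullet> g = 0"
  shows "cos t *\<^sub>R g + sin t *\<^sub>R u \<in> S3"
proof -
  let ?c = "cos t *\<^sub>R g + sin t *\<^sub>R u"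
  have "?c \<bullet> ?c = (cos t)\<^sup>2 * (g \<bullet> g) + 2 * cos t * sin t * (u \<bullet> g) + (sin t)\<^sup>2 * (u \<bullet> u)"
    by (simp add: inner_add_left inner_add_right inner_commute power2_eq_square algebra_simps)
  also have "\<dots> = 1" using g uu ug by (simp add: S3_iff)
  finally show ?thesis using S3_iff by blast
qed

text \<open>A function that is constant on S^3 near g has vanishing derivative along T_g S^3:
  differentiate along the great circle through g in direction X.\<close>
lemma deriv_locally_constant_on_S3:
  fixes h :: "quat \<Rightarrow> 'b::real_normed_vector"
  assumes g: "g \<in> S3" and X: "X \<bullet> g = 0" and hd: "h differentiable (at g)" and e: "e > 0"
    and loc: "\<forall>y\<in>S3. dist y g < e \<longrightarrow> h y = h g"
  shows "frechet_derivative h (at g) X = 0"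
proof (cases "X = 0")
  case True
  then show ?thesis using linear_frechet_derivative[OF hd] by (simp add: linear_0)
next
  case False
  define u where "u = (1 / norm X) *\<^sub>R X"
  have nX: "norm X > 0" using False by simp
  have uu: "u \<bullet> u = 1"
    using nX by (simp add: u_def inner_commute power2_norm_eq_inner[symmetric] field_simps)
  have ug: "u \<bullet> g = 0" using X by (simp add: u_def)
  define \<gamma> where "\<gamma> = (\<lambda>t::real. cos t *\<^sub>R g + sin t *\<^sub>R u)"
  have \<gamma>0: "\<gamma> 0 = g" by (simp add: \<gamma>_def)
  have \<gamma>S: "\<gamma> t \<in> S3" for t unfolding \<gamma>_def by (rule great_circle_in_S3[OF g uu ug])
  have d\<gamma>: "(\<gamma> has_derivative (\<lambda>t. t *\<^sub>R u)) (at 0)"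
    unfolding \<gamma>_def by (rule derivative_eq_intros refl | simp)+
  have dh: "(h has_derivative frechet_derivative h (at g)) (at (\<gamma> 0))"
    using hd \<gamma>0 frechet_derivative_works by metis
  have comp: "((h \<circ> \<gamma>) has_derivative (frechet_derivative h (at g) \<circ> (\<lambda>t. t *\<^sub>R u))) (at 0)"
    by (rule diff_chain_at[OF d\<gamma> dh])
  have "continuous (at 0) \<gamma>" using d\<gamma> has_derivative_continuous by blast
  then have "\<forall>\<^sub>F t in at 0. dist (\<gamma> t) g < e"
    using e \<gamma>0 unfolding continuous_at tendsto_iff by simp
  then have ev: "\<forall>\<^sub>F t in at 0. (h \<circ> \<gamma>) t = (\<lambda>_. h g) t"
    by eventually_elim (use loc \<gamma>S in auto)
  have "((\<lambda>_. h g) has_derivative (frechet_derivative h (at g) \<circ> (\<lambda>t. t *\<^sub>R u))) (at 0)"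
    by (rule has_derivative_transform_eventually[OF comp ev]) (auto simp: \<gamma>0)
  then have "(frechet_derivative h (at g) \<circ> (\<lambda>t. t *\<^sub>R u)) = (\<lambda>_. 0)"
    using has_derivative_const has_derivative_unique by blast
  then have "frechet_derivative h (at g) u = 0" by (metis comp_apply scaleR_one)
  moreover have "X = norm X *\<^sub>R u" using nX by (simp add: u_def)
  ultimately show ?thesis
    using linear_cmul[OF linear_frechet_derivative[OF hd], of "norm X" u] by simp
qed

lemma smooth_differentiable: "smooth_fun F \<Longrightarrow> F differentiable (at x)"
  unfolding smooth_fun_def by (metis iter_deriv.simps(1))

lemma smooth_continuous_on: assumes "smooth_fun F" shows "continuous_on UNIV F"
  using smooth_differentiable[OF assms]
  by (simp add: continuous_at_imp_continuous_on differentiable_imp_continuous_within)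

lemma continuous_on_smooth_deriv:
  fixes F :: "quat \<Rightarrow> 'b::real_normed_vector"
  assumes sF: "smooth_fun F" and h: "continuous_on UNIV h"
  shows "continuous_on UNIV (\<lambda>g. frechet_derivative F (at g) (h g))"
proof -
  have cb: "continuous_on UNIV (\<lambda>g. frechet_derivative F (at g) b)" for b
  proof -
    have "\<forall>x. iter_deriv F [b] differentiable (at x)" using sF unfolding smooth_fun_def by blast
    then show ?thesis
      by (simp add: continuous_at_imp_continuous_on differentiable_imp_continuous_within)
  qed
  have e: "frechet_derivative F (at g) (h g) = (\<Sum>b\<in>Basis. (h g \<bullet> b) *\<^sub>R frechet_derivative F (at g) b)" for g
  proof -
    have lin: "linear (frechet_derivative F (at g))"
      by (rule linear_frechet_derivative[OF smooth_differentiable[OF sF]])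
    have "frechet_derivative F (at g) (h g) = frechet_derivative F (at g) (\<Sum>b\<in>Basis. (h g \<bullet> b) *\<^sub>R b)"
      by (simp add: euclidean_representation)
    also have "\<dots> = (\<Sum>b\<in>Basis. (h g \<bullet> b) *\<^sub>R frechet_derivative F (at g) b)"
      by (simp add: linear_sum[OF lin] linear_cmul[OF lin])
    finally show ?thesis .
  qed
  show ?thesis unfolding e by (intro continuous_intros cb h)
qed

lemma continuous_on_qmul: "continuous_on S f \<Longrightarrow> continuous_on S g \<Longrightarrow> continuous_on S (\<lambda>x. qmul (f x) (g x))"
  by (rule bounded_bilinear.continuous_on[OF bounded_bilinear_qmul])

lemma continuous_on_qconj: "continuous_on S f \<Longrightarrow> continuous_on S (\<lambda>x. qconj (f x))"
  using bounded_linear.continuous_on[OF bounded_linear_qconj] by blast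

lemma continuous_on_Efr: "continuous_on UNIV (Efr a)"
  unfolding Efr_def[abs_def] by (intro continuous_on_qmul continuous_intros)

lemma vector3_eq: "(vector [a, b, c] :: real^3) = a *\<^sub>R axis 1 1 + b *\<^sub>R axis 2 1 + c *\<^sub>R axis 3 1"
  by (simp add: vec_eq_iff forall_3 axis_def)

section \<open>The spinor connection in the frame\<close>

text \<open>The connection term of spin_nabla along X = g (0,x) is Clifford multiplication by x/2;
  in particular Phi = [u~,1] is a Killing spinor with constant 1/2.\<close>
lemma spin_connection_term:
  "(1/4) *\<^sub>R (\<Sum>a<3. \<Sum>b<3. ((0, snd (qmul (0,x) (eps a))) \<bullet> eps b) *\<^sub>R qmul (eps a) (qmul (eps b) f))
   = (1/2) *\<^sub>R qmul (0,x) f"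
  by (simp add: eval_nat_numeral eps_def qi_def qj_def qk_def quat_simps prod_eq_iff axis_def;
      simp add: field_simps)

lemma spin_nabla_frame:
  assumes g: "g \<in> S3" and X: "X \<bullet> g = 0"
  shows "spin_nabla \<psi> g X = dderiv \<psi> g X + (1/2) *\<^sub>R qmul (qmul (qconj g) X) (\<psi> g)"
proof -
  have gg: "g \<bullet> g = 1" using g S3_iff by blast
  define x where "x = snd (qmul (qconj g) X)"
  have Xd: "X = qmul g (0, x)" using tangent_imag[OF gg X] x_def by simp
  have cx: "qmul (qconj g) X = (0, x)" using Xd unit_cancel_left[OF gg] by simp
  have lc: "lc_nabla (Efr a) g X \<bullet> Efr b g = (0, snd (qmul (0,x) (eps a))) \<bullet> eps b" for a b
  proof -
    have "lc_nabla (Efr a) g X = qmul g (0, snd (qmul (0,x) (eps a)))"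
      unfolding lc_nabla_def deriv_Efr Xd qmul_assoc using tproj_qmul_unit[OF gg] by simp
    then show ?thesis by (simp add: Efr_def inner_qmul_left gg)
  qed
  have cl: "cliff g (Efr a g) f = qmul (eps a) f" for a f
    by (simp add: cliff_def Efr_def unit_cancel_left[OF gg])
  show ?thesis unfolding spin_nabla_def lc cl spin_connection_term cx by simp
qed

section \<open>Pointwise linear algebra\<close>

text \<open>At a point g the relevant data are a = alpha g, the coordinates v of V g = g (0,v),
  the columns m0, m1, m2 of the matrix of nabla V in the frame (nabla_{E_a} V = g (0, m_a))
  and the frame coordinates w of d alpha.\<close>

definition mat3 :: "real^3 \<Rightarrow> real^3 \<Rightarrow> real^3 \<Rightarrow> real^3 \<Rightarrow> real^3" where
  "mat3 m0 m1 m2 x = (x$1) *\<^sub>R m0 + (x$2) *\<^sub>R m1 + (x$3) *\<^sub>R m2"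

definition mat3T :: "real^3 \<Rightarrow> real^3 \<Rightarrow> real^3 \<Rightarrow> real^3 \<Rightarrow> real^3" where
  "mat3T m0 m1 m2 v = vector [m0 \<bullet> v, m1 \<bullet> v, m2 \<bullet> v]"

text \<open>The skew part of the matrix as a vector (the curl of V) and its trace (the divergence).\<close>
definition skew3 :: "real^3 \<Rightarrow> real^3 \<Rightarrow> real^3 \<Rightarrow> real^3" where
  "skew3 m0 m1 m2 = vector [m1$3 - m2$2, m2$1 - m0$3, m0$2 - m1$1]"

definition trace3 :: "real^3 \<Rightarrow> real^3 \<Rightarrow> real^3 \<Rightarrow> real" where
  "trace3 m0 m1 m2 = m0$1 + m1$2 + m2$3"

text \<open>nabla_X Psi in the frame, for X = g (0,x) (see spin_nabla_spinor below).\<close>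
definition nabla_model :: "real \<Rightarrow> real^3 \<Rightarrow> real^3 \<Rightarrow> real^3 \<Rightarrow> real^3 \<Rightarrow> real^3 \<Rightarrow> real^3 \<Rightarrow> quat" where
  "nabla_model a v m0 m1 m2 w x = qmul (0, -x) (0, v) + (-(v \<bullet> x), mat3 m0 m1 m2 x) + (w \<bullet> x, 0)
      + (1/2) *\<^sub>R qmul (0,x) (a, v)"

text \<open>The candidate endomorphism: for a unit spinor (a,v), the solution y of
  nabla_x Psi = (0,y) (a,v) must be the imaginary part of nabla_x Psi (a,v)^{-1}.\<close>
definition endo_model :: "real \<Rightarrow> real^3 \<Rightarrow> real^3 \<Rightarrow> real^3 \<Rightarrow> real^3 \<Rightarrow> real^3 \<Rightarrow> real^3 \<Rightarrow> real^3" where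
  "endo_model a v m0 m1 m2 w x = snd (qmul (nabla_model a v m0 m1 m2 w x) (a, -v))"

text \<open>The obstruction to symmetry of the candidate endomorphism.\<close>
definition obstruction :: "real \<Rightarrow> real^3 \<Rightarrow> real^3 \<Rightarrow> real^3 \<Rightarrow> real^3 \<Rightarrow> real^3 \<Rightarrow> real^3" where
  "obstruction a v m0 m1 m2 w = (2*a) *\<^sub>R v + a *\<^sub>R skew3 m0 m1 m2 + trace3 m0 m1 m2 *\<^sub>R v
     - mat3 m0 m1 m2 v + cross3 v w"

text \<open>Equations (ii) and (iii) of the proposition in frame coordinates.\<close>
definition eq_ii_model :: "real \<Rightarrow> real^3 \<Rightarrow> real^3 \<Rightarrow> real^3 \<Rightarrow> real^3 \<Rightarrow> real^3 \<Rightarrow> real^3" where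
  "eq_ii_model a v m0 m1 m2 w =
     - cross3 (mat3 m0 m1 m2 v) v - (w \<bullet> v) *\<^sub>R v + a *\<^sub>R mat3 m0 m1 m2 v + w"

definition eq_iii_model :: "real \<Rightarrow> real^3 \<Rightarrow> real^3 \<Rightarrow> real^3 \<Rightarrow> real^3 \<Rightarrow> real^3 \<Rightarrow> real" where
  "eq_iii_model a v m0 m1 m2 w =
     a * (v \<bullet> skew3 m0 m1 m2) + (2*a + trace3 m0 m1 m2) * (1 - a\<^sup>2) + a * (w \<bullet> v)"

lemmas model_defs = nabla_model_def endo_model_def obstruction_def eq_ii_model_def
  eq_iii_model_def mat3_def mat3T_def skew3_def trace3_def

lemma linear_endo_model: "linear (endo_model a v m0 m1 m2 w)"
  unfolding linear_iff by (simp add: model_defs quat_simps) (simp add: field_simps)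

lemma endo_model_antisym_part:
  "endo_model a v m0 m1 m2 w x \<bullet> x' - x \<bullet> endo_model a v m0 m1 m2 w x'
     = obstruction a v m0 m1 m2 w \<bullet> cross3 x x'"
  by (simp add: model_defs quat_simps) (simp add: field_simps)

lemma endo_model_symmetric_iff:
  "(\<forall>x x'. endo_model a v m0 m1 m2 w x \<bullet> x' = x \<bullet> endo_model a v m0 m1 m2 w x')
     \<longleftrightarrow> obstruction a v m0 m1 m2 w = 0"
proof
  assume "\<forall>x x'. endo_model a v m0 m1 m2 w x \<bullet> x' = x \<bullet> endo_model a v m0 m1 m2 w x'"
  then have "obstruction a v m0 m1 m2 w \<bullet> cross3 x x' = 0" for x x'
    using endo_model_antisym_part[of a v m0 m1 m2 w x x'] by simp
  from this[of "axis 2 1" "axis 3 1"] this[of "axis 3 1" "axis 1 1"] this[of "axis 1 2" "axis 2 1"]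
  show "obstruction a v m0 m1 m2 w = 0" by (simp add: cross3_simps forall_3 axis_def)
next
  assume "obstruction a v m0 m1 m2 w = 0"
  then show "\<forall>x x'. endo_model a v m0 m1 m2 w x \<bullet> x' = x \<bullet> endo_model a v m0 m1 m2 w x'"
    using endo_model_antisym_part[of a v m0 m1 m2 w] by (simp add: algebra_simps)
qed

text \<open>The real part of nabla_x Psi (a,v)^{-1} is half the derivative of the squared norm of Psi.\<close>
lemma nabla_model_real_part:
  "fst (qmul (nabla_model a v m0 m1 m2 w x) (a, -v)) = x \<bullet> (mat3T m0 m1 m2 v + a *\<^sub>R w)"
  by (simp add: model_defs quat_simps) (simp add: field_simps)

lemma qmul_pair_conj: "qmul (a, v) (a, -v) = (a\<^sup>2 + v \<bullet> v, 0)" "qmul (a, -v) (a, v) = (a\<^sup>2 + v \<bullet> v, 0)"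
  by (simp_all add: quat_simps power2_eq_square)

lemma endo_model_unique:
  assumes "a\<^sup>2 + v \<bullet> v = 1" "nabla_model a v m0 m1 m2 w x = qmul (0, y) (a, v)"
  shows "endo_model a v m0 m1 m2 w x = y"
  unfolding endo_model_def assms(2) qmul_assoc qmul_pair_conj assms(1) by (simp add: qmul_real_right)

lemma endo_model_solves:
  assumes "a\<^sup>2 + v \<bullet> v = 1" "mat3T m0 m1 m2 v + a *\<^sub>R w = 0"
  shows "qmul (0, endo_model a v m0 m1 m2 w x) (a, v) = nabla_model a v m0 m1 m2 w x"
proof -
  have "qmul (nabla_model a v m0 m1 m2 w x) (a, -v) = (0, endo_model a v m0 m1 m2 w x)"
    using nabla_model_real_part[of a v m0 m1 m2 w x] assms(2) by (simp add: endo_model_def prod_eq_iff)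
  then have "qmul (0, endo_model a v m0 m1 m2 w x) (a, v)
      = qmul (qmul (nabla_model a v m0 m1 m2 w x) (a, -v)) (a, v)" by simp
  also have "\<dots> = nabla_model a v m0 m1 m2 w x"
    unfolding qmul_assoc qmul_pair_conj assms(1) by (simp add: qmul_real_right)
  finally show ?thesis .
qed

text \<open>Modulo the unit-norm condition and its derivative, (ii) is v x Q = 0 and (iii) is v . Q = 0.\<close>
lemma eq_ii_model_identity:
  "eq_ii_model a v m0 m1 m2 w = - cross3 v (obstruction a v m0 m1 m2 w) + (1 - a\<^sup>2 - v \<bullet> v) *\<^sub>R w
     + a *\<^sub>R (mat3T m0 m1 m2 v + a *\<^sub>R w)"
  by (simp add: model_defs quat_simps power2_eq_square)

lemma eq_iii_model_identity:
  "eq_iii_model a v m0 m1 m2 w = v \<bullet> obstruction a v m0 m1 m2 w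
     + (2*a + trace3 m0 m1 m2) * (1 - a\<^sup>2 - v \<bullet> v) + (mat3T m0 m1 m2 v + a *\<^sub>R w) \<bullet> v"
  by (simp add: model_defs quat_simps power2_eq_square)

lemma obstruction_zero_imp_equations:
  assumes "a\<^sup>2 + v \<bullet> v = 1" "mat3T m0 m1 m2 v + a *\<^sub>R w = 0" "obstruction a v m0 m1 m2 w = 0"
  shows "eq_ii_model a v m0 m1 m2 w = 0 \<and> eq_iii_model a v m0 m1 m2 w = 0"
  using assms eq_ii_model_identity eq_iii_model_identity by simp

lemma equations_imp_obstruction_zero:
  assumes "a\<^sup>2 + v \<bullet> v = 1" "mat3T m0 m1 m2 v + a *\<^sub>R w = 0" "v \<noteq> 0"
    and "eq_ii_model a v m0 m1 m2 w = 0" "eq_iii_model a v m0 m1 m2 w = 0"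
  shows "obstruction a v m0 m1 m2 w = 0"
proof -
  have unit: "1 - a\<^sup>2 - v \<bullet> v = 0" using assms(1) by simp
  have "cross3 v (obstruction a v m0 m1 m2 w) = 0"
    using assms(2,4) unit eq_ii_model_identity[of a v m0 m1 m2 w] by simp
  moreover have "v \<bullet> obstruction a v m0 m1 m2 w = 0"
    using assms(2,5) unit eq_iii_model_identity[of a v m0 m1 m2 w] by simp
  ultimately show ?thesis using norm_cross_dot[of v "obstruction a v m0 m1 m2 w"] assms(3) by simp
qed

definition spinor_of :: "(quat \<Rightarrow> quat) \<Rightarrow> (quat \<Rightarrow> real) \<Rightarrow> quat \<Rightarrow> quat" where
  "spinor_of V \<alpha> g = cliff g (V g) (Phi g) + \<alpha> g *\<^sub>R Phi g"

definition equation_ii :: "(quat \<Rightarrow> quat) \<Rightarrow> (quat \<Rightarrow> real) \<Rightarrow> quat \<Rightarrow> bool" where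
  "equation_ii V \<alpha> g \<longleftrightarrow> - interior2 g (V g) (hodge1 g (lc_nabla V g (V g)))
     - vderiv V \<alpha> g *\<^sub>R V g + \<alpha> g *\<^sub>R lc_nabla V g (V g) + dfun \<alpha> g = 0"

definition equation_iii :: "(quat \<Rightarrow> quat) \<Rightarrow> (quat \<Rightarrow> real) \<Rightarrow> quat \<Rightarrow> bool" where
  "equation_iii V \<alpha> g \<longleftrightarrow> \<alpha> g * hodge3 g (wedge12 (V g) (dvf V g))
     + (2 * \<alpha> g - codiff V g) * (1 - (\<alpha> g)\<^sup>2) + \<alpha> g * vderiv V \<alpha> g = 0"

text \<open>Frame coordinates at g: V g = g (0, vc V g), nabla_{E_a} V = g (0, mc V a g) and
  d alpha (E_a) = (wc alpha g)_a.\<close>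
definition vc :: "(quat \<Rightarrow> quat) \<Rightarrow> quat \<Rightarrow> real^3" where
  "vc V g = snd (qmul (qconj g) (V g))"

definition mc :: "(quat \<Rightarrow> quat) \<Rightarrow> nat \<Rightarrow> quat \<Rightarrow> real^3" where
  "mc V a g = snd (qmul (qconj g) (dderiv V g (Efr a g)))"

definition wc :: "(quat \<Rightarrow> real) \<Rightarrow> quat \<Rightarrow> real^3" where
  "wc \<alpha> g = vector [dderiv \<alpha> g (Efr 0 g), dderiv \<alpha> g (Efr 1 g), dderiv \<alpha> g (Efr 2 g)]"

definition Q :: "(quat \<Rightarrow> quat) \<Rightarrow> (quat \<Rightarrow> real) \<Rightarrow> quat \<Rightarrow> real^3" where
  "Q V \<alpha> g = obstruction (\<alpha> g) (vc V g) (mc V 0 g) (mc V 1 g) (mc V 2 g) (wc \<alpha> g)"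

definition A_cand :: "(quat \<Rightarrow> quat) \<Rightarrow> (quat \<Rightarrow> real) \<Rightarrow> quat \<Rightarrow> quat \<Rightarrow> quat" where
  "A_cand V \<alpha> g X = qmul g (0, endo_model (\<alpha> g) (vc V g) (mc V 0 g) (mc V 1 g) (mc V 2 g) (wc \<alpha> g)
     (snd (qmul (qconj g) X)))"

context
  fixes V :: "quat \<Rightarrow> quat" and \<alpha> :: "quat \<Rightarrow> real"
  assumes tangent_V: "\<forall>g\<in>S3. tangent g (V g)"
    and smooth_V: "smooth_fun V" and smooth_\<alpha>: "smooth_fun \<alpha>"
begin

lemma has_derivative_V: "(V has_derivative dderiv V g) (at g)"
  unfolding dderiv_def[abs_def] using frechet_derivative_works smooth_differentiable[OF smooth_V] by blast

lemma has_derivative_\<alpha>: "(\<alpha> has_derivative dderiv \<alpha> g) (at g)"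
  unfolding dderiv_def[abs_def] using frechet_derivative_works smooth_differentiable[OF smooth_\<alpha>] by blast

lemma linear_dderiv_V: "linear (dderiv V g)"
  using has_derivative_V has_derivative_linear by blast

lemma linear_dderiv_\<alpha>: "linear (dderiv \<alpha> g)"
  using has_derivative_\<alpha> has_derivative_linear by blast

lemma V_tangent: "g \<in> S3 \<Longrightarrow> V g \<bullet> g = 0"
  using tangent_V by (simp add: tangent_def)

lemma V_frame: "g \<in> S3 \<Longrightarrow> V g = qmul g (0, vc V g)"
  unfolding vc_def by (rule tangent_imag) (simp_all add: S3_iff V_tangent)

lemma qconj_V: "g \<in> S3 \<Longrightarrow> qmul (qconj g) (V g) = (0, vc V g)"
  using V_frame unit_cancel_left S3_iff by metis

lemma norm_V_coords: assumes g: "g \<in> S3" shows "(norm (V g))\<^sup>2 = vc V g \<bullet> vc V g"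
  using g unfolding power2_norm_eq_inner V_frame[OF g] by (simp add: inner_translate S3_iff)

lemma spinor_coords: "g \<in> S3 \<Longrightarrow> spinor_of V \<alpha> g = (\<alpha> g, vc V g)"
  by (simp add: spinor_of_def cliff_def Phi_def qconj_V qone_def qmul_real_right prod_eq_iff)

lemma unit_norm_iff:
  assumes g: "g \<in> S3" shows "norm (spinor_of V \<alpha> g) = 1 \<longleftrightarrow> (\<alpha> g)\<^sup>2 + (norm (V g))\<^sup>2 = 1"
  using norm_V_coords[OF g] by (simp add: spinor_coords[OF g] norm_Pair power2_norm_eq_inner)

lemma unit_coords:
  assumes "g \<in> S3" shows "(\<alpha> g)\<^sup>2 + (norm (V g))\<^sup>2 = 1 \<longleftrightarrow> (\<alpha> g)\<^sup>2 + vc V g \<bullet> vc V g = 1"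
  by (simp only: norm_V_coords[OF assms])

lemma vc_zero_iff: assumes g: "g \<in> S3" shows "vc V g = 0 \<longleftrightarrow> V g = 0"
proof -
  have "V g = 0 \<longleftrightarrow> (0::real, vc V g) = 0"
    using g unfolding V_frame[OF g] by (simp only: S3_iff qmul_unit_eq_0)
  then show ?thesis by (simp add: zero_prod_def)
qed

text \<open>Differentiating V g . g = 0 along S^3 gives the real part of g^{-1} dV(X).\<close>
lemma inner_dderiv_V:
  assumes g: "g \<in> S3" and X: "X \<bullet> g = 0"
  shows "dderiv V g X \<bullet> g = - (V g \<bullet> X)"
proof -
  have hd: "((\<lambda>y. V y \<bullet> y) has_derivative (\<lambda>h. V g \<bullet> h + dderiv V g h \<bullet> g)) (at g)"
    by (rule has_derivative_inner[OF has_derivative_V has_derivative_ident])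
  have "\<forall>y\<in>S3. dist y g < 1 \<longrightarrow> V y \<bullet> y = V g \<bullet> g" using V_tangent g by simp
  then have "frechet_derivative (\<lambda>y. V y \<bullet> y) (at g) X = 0"
    using deriv_locally_constant_on_S3[OF g X _ zero_less_one] hd differentiableI by blast
  then show ?thesis unfolding frechet_derivative_at[OF hd, symmetric] by simp
qed

text \<open>g^{-1} dV(E_a) = (- v . e_a, m_a): its real part comes from tangency of V.\<close>
lemma dderiv_V_Efr:
  assumes g: "g \<in> S3"
  shows "qmul (qconj g) (dderiv V g (Efr a g)) = (- (vc V g \<bullet> ax a), mc V a g)"
proof -
  have gg: "g \<bullet> g = 1" using g S3_iff by blast
  have "fst (qmul (qconj g) (dderiv V g (Efr a g))) = dderiv V g (Efr a g) \<bullet> g"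
    by (simp add: fst_qmul_qconj inner_commute)
  also have "\<dots> = - (V g \<bullet> Efr a g)" using inner_dderiv_V[OF g Efr_tangent[OF gg]] .
  also have "V g \<bullet> Efr a g = vc V g \<bullet> ax a" using V_frame[OF g] inner_Efr[OF gg] by simp
  finally show ?thesis by (simp add: mc_def prod_eq_iff)
qed

lemma dderiv_V_frame:
  assumes g: "g \<in> S3" and X: "X \<bullet> g = 0"
  shows "qmul (qconj g) (dderiv V g X) = (- (vc V g \<bullet> snd (qmul (qconj g) X)),
     mat3 (mc V 0 g) (mc V 1 g) (mc V 2 g) (snd (qmul (qconj g) X)))"
proof -
  have gg: "g \<bullet> g = 1" using g S3_iff by blast
  have L: "linear (\<lambda>X. qmul (qconj g) (dderiv V g X))"
    using linear_compose[OF linear_dderiv_V linear_qmul_left] by (simp add: o_def)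
  show ?thesis
    unfolding linear_frame_expansion[OF gg X L] dderiv_V_Efr[OF g] ax_vals inner_axis3
    by (simp add: mat3_def inner_vec_def sum_3 algebra_simps)
qed

lemma dderiv_\<alpha>_frame:
  assumes g: "g \<in> S3" and X: "X \<bullet> g = 0"
  shows "dderiv \<alpha> g X = wc \<alpha> g \<bullet> snd (qmul (qconj g) X)"
proof -
  have gg: "g \<bullet> g = 1" using g S3_iff by blast
  show ?thesis unfolding linear_frame_expansion[OF gg X linear_dderiv_\<alpha>]
    by (simp add: wc_def inner_vec_def sum_3 algebra_simps)
qed

lemma lc_nabla_V_frame:
  assumes g: "g \<in> S3" and X: "X \<bullet> g = 0"
  shows "lc_nabla V g X = qmul g (0, mat3 (mc V 0 g) (mc V 1 g) (mc V 2 g) (snd (qmul (qconj g) X)))"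
proof -
  have gg: "g \<bullet> g = 1" using g S3_iff by blast
  have "lc_nabla V g X = tproj g (qmul g (qmul (qconj g) (dderiv V g X)))"
    unfolding lc_nabla_def unit_cancel_right[OF gg] ..
  then show ?thesis unfolding tproj_qmul_unit[OF gg] dderiv_V_frame[OF g X] by simp
qed

lemma lc_nabla_V_Efr: "g \<in> S3 \<Longrightarrow> lc_nabla V g (Efr a g) = qmul g (0, mc V a g)"
  by (simp add: lc_nabla_def mc_def S3_iff tproj_qmul_unit[symmetric] unit_cancel_right)

lemma vderiv_coords: "g \<in> S3 \<Longrightarrow> vderiv V \<alpha> g = wc \<alpha> g \<bullet> vc V g"
  by (simp add: vderiv_def dderiv_\<alpha>_frame V_tangent qconj_V)

lemma dfun_coords: "dfun \<alpha> g = qmul g (0, wc \<alpha> g)"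
  unfolding dfun_def frame_expansion by (simp add: wc_def eval_nat_numeral)

lemma interior_hodge_coords:
  assumes g: "g \<in> S3"
  shows "interior2 g (V g) (hodge1 g (qmul g (0, n))) = qmul g (0, cross3 n (vc V g))"
proof -
  have gg: "g \<bullet> g = 1" using g S3_iff by blast
  have "vol g (qmul g (0, n)) (V g) (Efr a g) = cross3 n (vc V g) \<bullet> ax a" for a
    unfolding vol_def unit_cancel_left[OF gg] qconj_V[OF g] qconj_Efr[OF gg] by (simp add: eps_imag)
  then show ?thesis unfolding interior2_def hodge1_def frame_expansion[of g "cross3 n (vc V g)"]
    by (simp add: eval_nat_numeral)
qed

lemma equation_ii_coords:
  assumes g: "g \<in> S3"
  shows "equation_ii V \<alpha> g
    \<longleftrightarrow> eq_ii_model (\<alpha> g) (vc V g) (mc V 0 g) (mc V 1 g) (mc V 2 g) (wc \<alpha> g) = 0"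
proof -
  have gg: "g \<bullet> g = 1" using g S3_iff by blast
  define n where "n = mat3 (mc V 0 g) (mc V 1 g) (mc V 2 g) (vc V g)"
  define c where "c = cross3 n (vc V g)"
  define s where "s = wc \<alpha> g \<bullet> vc V g"
  have lc: "lc_nabla V g (V g) = qmul g (0, n)"
    using lc_nabla_V_frame[OF g V_tangent[OF g]] qconj_V[OF g] n_def by simp
  have sV: "s *\<^sub>R V g = qmul g (0, s *\<^sub>R vc V g)"
    using V_frame[OF g] by (simp add: qmul_scaleR_right[symmetric])
  have "- qmul g (0, c) - qmul g (0, s *\<^sub>R vc V g) + \<alpha> g *\<^sub>R qmul g (0, n) + qmul g (0, wc \<alpha> g)
     = qmul g (- (0, c) - (0, s *\<^sub>R vc V g) + \<alpha> g *\<^sub>R (0, n) + (0, wc \<alpha> g))"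
    by (simp only: qmul_uminus_right qmul_diff_right qmul_scaleR_right qmul_add_right)
  also have "- (0, c) - (0, s *\<^sub>R vc V g) + \<alpha> g *\<^sub>R (0, n) + (0, wc \<alpha> g)
     = (0::real, eq_ii_model (\<alpha> g) (vc V g) (mc V 0 g) (mc V 1 g) (mc V 2 g) (wc \<alpha> g))"
    by (simp add: prod_eq_iff eq_ii_model_def n_def c_def s_def)
  finally have expand: "- interior2 g (V g) (hodge1 g (lc_nabla V g (V g)))
      - vderiv V \<alpha> g *\<^sub>R V g + \<alpha> g *\<^sub>R lc_nabla V g (V g) + dfun \<alpha> g
      = qmul g (0, eq_ii_model (\<alpha> g) (vc V g) (mc V 0 g) (mc V 1 g) (mc V 2 g) (wc \<alpha> g))"
    unfolding lc interior_hodge_coords[OF g] vderiv_coords[OF g] dfun_coords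
      s_def[symmetric] sV c_def[symmetric] .
  show ?thesis unfolding equation_ii_def expand qmul_unit_eq_0[OF gg] by (simp add: zero_prod_def)
qed

lemma equation_iii_coords:
  assumes g: "g \<in> S3"
  shows "equation_iii V \<alpha> g
    \<longleftrightarrow> eq_iii_model (\<alpha> g) (vc V g) (mc V 0 g) (mc V 1 g) (mc V 2 g) (wc \<alpha> g) = 0"
proof -
  have gg: "g \<bullet> g = 1" using g S3_iff by blast
  have VE: "V g \<bullet> Efr a g = vc V g \<bullet> ax a" for a
    using V_frame[OF g] inner_Efr[OF gg] by simp
  have "codiff V g = - trace3 (mc V 0 g) (mc V 1 g) (mc V 2 g)"
    unfolding codiff_def by (simp add: eval_nat_numeral lc_nabla_V_Efr[OF g] inner_Efr[OF gg] trace3_def)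
  moreover have "hodge3 g (wedge12 (V g) (dvf V g)) = vc V g \<bullet> skew3 (mc V 0 g) (mc V 1 g) (mc V 2 g)"
    unfolding hodge3_def wedge12_def dvf_def lc_nabla_V_Efr[OF g] inner_Efr[OF gg] VE ax_vals inner_axis3
    by (simp add: skew3_def inner_vec_def sum_3 algebra_simps)
  ultimately show ?thesis
    unfolding equation_iii_def eq_iii_model_def vderiv_coords[OF g] by simp
qed

text \<open>Since Phi is constant in the frame, nabla Psi only involves dV, d alpha and Clifford multiplication.\<close>
lemma has_derivative_spinor:
  "(spinor_of V \<alpha> has_derivative
    (\<lambda>X. qmul (qconj g) (dderiv V g X) + qmul (qconj X) (V g) + dderiv \<alpha> g X *\<^sub>R qone)) (at g)"
proof -
  have e: "spinor_of V \<alpha> = (\<lambda>g. qmul (qconj g) (V g) + \<alpha> g *\<^sub>R qone)"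
    by (simp add: spinor_of_def cliff_def Phi_def fun_eq_iff)
  have hq: "(qconj has_derivative qconj) (at g)"
    by (rule bounded_linear_imp_has_derivative[OF bounded_linear_qconj])
  show ?thesis unfolding e
    by (intro has_derivative_add bounded_bilinear.FDERIV[OF bounded_bilinear_qmul hq has_derivative_V]
        has_derivative_scaleR[OF has_derivative_\<alpha> has_derivative_const, simplified])
qed

lemma spin_nabla_spinor:
  assumes g: "g \<in> S3" and X: "X \<bullet> g = 0"
  shows "spin_nabla (spinor_of V \<alpha>) g X
     = nabla_model (\<alpha> g) (vc V g) (mc V 0 g) (mc V 1 g) (mc V 2 g) (wc \<alpha> g) (snd (qmul (qconj g) X))"
proof -
  have gg: "g \<bullet> g = 1" using g S3_iff by blast
  define x where "x = snd (qmul (qconj g) X)"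
  have Xd: "X = qmul g (0, x)" using tangent_imag[OF gg X] x_def by simp
  have cx: "qmul (qconj g) X = (0, x)" using Xd unit_cancel_left[OF gg] by simp
  have dd: "dderiv (spinor_of V \<alpha>) g X
      = qmul (qconj g) (dderiv V g X) + qmul (qconj X) (V g) + dderiv \<alpha> g X *\<^sub>R qone"
    unfolding dderiv_def by (simp add: frechet_derivative_at[OF has_derivative_spinor, symmetric] dderiv_def)
  have cXV: "qmul (qconj X) (V g) = qmul (0, -x) (0, vc V g)"
  proof -
    have "qconj X = qmul (0, -x) (qconj g)" unfolding Xd qconj_qmul by (simp add: qconj_def)
    then show ?thesis by (simp add: qmul_assoc qconj_V[OF g])
  qed
  show ?thesis
    unfolding spin_nabla_frame[OF g X] dd cXV dderiv_V_frame[OF g X] dderiv_\<alpha>_frame[OF g X]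
      spinor_coords[OF g] x_def[symmetric] cx
    by (simp add: nabla_model_def qone_def inner_commute)
qed

lemma unit_norm_derivative:
  assumes unit: "\<forall>g\<in>S3. (\<alpha> g)\<^sup>2 + (norm (V g))\<^sup>2 = 1" and g: "g \<in> S3"
  shows "mat3T (mc V 0 g) (mc V 1 g) (mc V 2 g) (vc V g) + \<alpha> g *\<^sub>R wc \<alpha> g = 0"
proof -
  have gg: "g \<bullet> g = 1" using g S3_iff by blast
  define N where "N y = \<alpha> y * \<alpha> y + V y \<bullet> V y" for y
  have hd: "(N has_derivative (\<lambda>h. (\<alpha> g * dderiv \<alpha> g h + dderiv \<alpha> g h * \<alpha> g)
      + (V g \<bullet> dderiv V g h + dderiv V g h \<bullet> V g))) (at g)"
    unfolding N_def[abs_def]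
    by (intro has_derivative_add has_derivative_mult has_derivative_inner has_derivative_V has_derivative_\<alpha>)
  have "\<forall>y\<in>S3. N y = 1" using unit by (simp add: N_def dot_square_norm power2_eq_square)
  then have const: "\<forall>y\<in>S3. dist y g < 1 \<longrightarrow> N y = N g" using g by auto
  have "\<alpha> g * dderiv \<alpha> g (Efr a g) + mc V a g \<bullet> vc V g = 0" for a
  proof -
    have "frechet_derivative N (at g) (Efr a g) = 0"
      using deriv_locally_constant_on_S3[OF g Efr_tangent[OF gg] _ zero_less_one const] hd
        differentiableI by blast
    then have "\<alpha> g * dderiv \<alpha> g (Efr a g) + V g \<bullet> dderiv V g (Efr a g) = 0"
      unfolding frechet_derivative_at[OF hd, symmetric] by (simp add: inner_commute)
    moreover have "V g \<bullet> dderiv V g (Efr a g) = mc V a g \<bullet> vc V g"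
    proof -
      have "V g \<bullet> dderiv V g (Efr a g) = qmul g (0, vc V g) \<bullet> qmul g (qmul (qconj g) (dderiv V g (Efr a g)))"
        unfolding unit_cancel_right[OF gg] V_frame[OF g, symmetric] ..
      also have "\<dots> = (0, vc V g) \<bullet> (- (vc V g \<bullet> ax a), mc V a g)"
        unfolding inner_qmul_left gg dderiv_V_Efr[OF g] by simp
      finally show ?thesis by (simp add: inner_prod_def inner_commute)
    qed
    ultimately show ?thesis by simp
  qed
  from this[of 0] this[of 1] this[of 2] show ?thesis
    by (simp add: mat3T_def wc_def vec_eq_iff forall_3 algebra_simps)
qed

section \<open>Generalized Killing spinors and the obstruction\<close>

lemma A_cand_translate:
  "g \<in> S3 \<Longrightarrow> A_cand V \<alpha> g (qmul g (0, x))
     = qmul g (0, endo_model (\<alpha> g) (vc V g) (mc V 0 g) (mc V 1 g) (mc V 2 g) (wc \<alpha> g) x)"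
  by (simp add: A_cand_def unit_cancel_left S3_iff)

lemma linear_A_cand: "linear (A_cand V \<alpha> g)"
proof -
  have "A_cand V \<alpha> g = qmul g \<circ> (\<lambda>z. (0, z))
      \<circ> endo_model (\<alpha> g) (vc V g) (mc V 0 g) (mc V 1 g) (mc V 2 g) (wc \<alpha> g) \<circ> snd \<circ> qmul (qconj g)"
    by (simp add: A_cand_def fun_eq_iff)
  moreover have "linear (\<lambda>z::real^3. (0::real, z))" "linear (snd :: quat \<Rightarrow> real^3)"
    by (simp_all add: linear_iff prod_eq_iff)
  ultimately show ?thesis by (simp only: linear_compose linear_qmul_left linear_endo_model)
qed

lemma tangent_A_cand: "g \<in> S3 \<Longrightarrow> tangent g (A_cand V \<alpha> g X)"
  by (simp add: A_cand_def tangent_def inner_qmul_unit S3_iff)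

lemma A_cand_symmetric_iff:
  assumes g: "g \<in> S3"
  shows "(\<forall>X Y. tangent g X \<longrightarrow> tangent g Y \<longrightarrow> A_cand V \<alpha> g X \<bullet> Y = X \<bullet> A_cand V \<alpha> g Y)
    \<longleftrightarrow> Q V \<alpha> g = 0"
proof -
  have gg: "g \<bullet> g = 1" using g S3_iff by blast
  have "(\<forall>X Y. tangent g X \<longrightarrow> tangent g Y \<longrightarrow> A_cand V \<alpha> g X \<bullet> Y = X \<bullet> A_cand V \<alpha> g Y)
    \<longleftrightarrow> (\<forall>x y. A_cand V \<alpha> g (qmul g (0, x)) \<bullet> qmul g (0, y) = qmul g (0, x) \<bullet> A_cand V \<alpha> g (qmul g (0, y)))"
    unfolding tangent_iff_translate[OF gg] by blast
  also have "\<dots> \<longleftrightarrow> (\<forall>x y. endo_model (\<alpha> g) (vc V g) (mc V 0 g) (mc V 1 g) (mc V 2 g) (wc \<alpha> g) x \<bullet> y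
      = x \<bullet> endo_model (\<alpha> g) (vc V g) (mc V 0 g) (mc V 1 g) (mc V 2 g) (wc \<alpha> g) y)"
    by (simp only: A_cand_translate[OF g] inner_translate[OF gg])
  also have "\<dots> \<longleftrightarrow> Q V \<alpha> g = 0" unfolding Q_def endo_model_symmetric_iff ..
  finally show ?thesis .
qed

text \<open>Once |Psi| = 1 (and hence d|Psi|^2 = 0), the candidate solves the Killing equation ...\<close>
lemma A_cand_solves:
  assumes unit: "\<forall>g\<in>S3. (\<alpha> g)\<^sup>2 + (norm (V g))\<^sup>2 = 1" and g: "g \<in> S3" and X: "X \<bullet> g = 0"
  shows "spin_nabla (spinor_of V \<alpha>) g X = cliff g (A_cand V \<alpha> g X) (spinor_of V \<alpha> g)"
proof -
  have gg: "g \<bullet> g = 1" using g S3_iff by blast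
  have unit_g: "(\<alpha> g)\<^sup>2 + vc V g \<bullet> vc V g = 1" using unit g unit_coords by blast
  show ?thesis
    using endo_model_solves[OF unit_g unit_norm_derivative[OF unit g]]
    by (simp add: spin_nabla_spinor[OF g X] spinor_coords[OF g] A_cand_def cliff_def
        unit_cancel_left[OF gg])
qed

text \<open>... and it is the only endomorphism that does, because a unit quaternion is invertible.\<close>
lemma A_cand_unique:
  assumes unit_g: "(\<alpha> g)\<^sup>2 + (norm (V g))\<^sup>2 = 1" and g: "g \<in> S3"
    and X: "tangent g X" and Y: "tangent g Y"
    and spin: "spin_nabla (spinor_of V \<alpha>) g X = cliff g Y (spinor_of V \<alpha> g)"
  shows "Y = A_cand V \<alpha> g X"
proof -
  have gg: "g \<bullet> g = 1" using g S3_iff by blast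
  obtain x y where x: "X = qmul g (0, x)" and y: "Y = qmul g (0, y)"
    using X Y tangent_iff_translate[OF gg] by blast
  have "endo_model (\<alpha> g) (vc V g) (mc V 0 g) (mc V 1 g) (mc V 2 g) (wc \<alpha> g) x = y"
  proof (rule endo_model_unique)
    show "(\<alpha> g)\<^sup>2 + vc V g \<bullet> vc V g = 1" using unit_g unit_coords[OF g] by blast
    have "X \<bullet> g = 0" using X by (simp add: tangent_def)
    then show "nabla_model (\<alpha> g) (vc V g) (mc V 0 g) (mc V 1 g) (mc V 2 g) (wc \<alpha> g) x = qmul (0, y) (\<alpha> g, vc V g)"
      using spin spin_nabla_spinor[OF g]
      by (simp add: x y spinor_coords[OF g] cliff_def unit_cancel_left[OF gg])
  qed
  then show ?thesis by (simp add: x y A_cand_translate[OF g])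
qed

lemma killing_iff_obstruction_zero:
  assumes unit: "\<forall>g\<in>S3. (\<alpha> g)\<^sup>2 + (norm (V g))\<^sup>2 = 1"
  shows "gen_killing (spinor_of V \<alpha>) \<longleftrightarrow> (\<forall>g\<in>S3. Q V \<alpha> g = 0)"
proof
  assume "gen_killing (spinor_of V \<alpha>)"
  then obtain A where A: "\<forall>g\<in>S3. linear (A g) \<and> (\<forall>X. tangent g X \<longrightarrow> tangent g (A g X))
    \<and> (\<forall>X Y. tangent g X \<longrightarrow> tangent g Y \<longrightarrow> A g X \<bullet> Y = X \<bullet> A g Y)
    \<and> (\<forall>X. tangent g X \<longrightarrow> spin_nabla (spinor_of V \<alpha>) g X = cliff g (A g X) (spinor_of V \<alpha> g))"
    unfolding gen_killing_def by blast
  show "\<forall>g\<in>S3. Q V \<alpha> g = 0"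
  proof
    fix g assume g: "g \<in> S3"
    have "A g X = A_cand V \<alpha> g X" if "tangent g X" for X
      using A_cand_unique[OF _ g that] A unit g that by blast
    then have "\<forall>X Y. tangent g X \<longrightarrow> tangent g Y \<longrightarrow> A_cand V \<alpha> g X \<bullet> Y = X \<bullet> A_cand V \<alpha> g Y"
      using A g by auto
    then show "Q V \<alpha> g = 0" using A_cand_symmetric_iff[OF g] by blast
  qed
next
  assume "\<forall>g\<in>S3. Q V \<alpha> g = 0"
  then show "gen_killing (spinor_of V \<alpha>)"
    unfolding gen_killing_def
    using linear_A_cand tangent_A_cand A_cand_symmetric_iff A_cand_solves[OF unit]
    by (intro exI[of _ "A_cand V \<alpha>"]) (auto simp: tangent_def)
qed

lemma continuous_on_Q: "continuous_on UNIV (Q V \<alpha>)"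
proof -
  have cV: "continuous_on UNIV (vc V)"
    unfolding vc_def[abs_def]
    by (intro continuous_intros continuous_on_qmul continuous_on_qconj smooth_continuous_on[OF smooth_V])
  have cm: "continuous_on UNIV (mc V a)" for a
    unfolding mc_def[abs_def] dderiv_def
    by (intro continuous_intros continuous_on_qmul continuous_on_qconj
        continuous_on_smooth_deriv[OF smooth_V] continuous_on_Efr)
  have cw: "continuous_on UNIV (wc \<alpha>)"
    unfolding wc_def[abs_def] dderiv_def vector3_eq
    by (intro continuous_intros continuous_on_smooth_deriv[OF smooth_\<alpha>] continuous_on_Efr)
  show ?thesis
    unfolding Q_def[abs_def] obstruction_def skew3_def trace3_def mat3_def vector3_eq
    by (intro continuous_intros continuous_on_cross cV cm cw smooth_continuous_on[OF smooth_\<alpha>])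
qed

text \<open>Q vanishing where V does not vanish forces Q = 0 everywhere: at points of the closure of
  {V /= 0} by continuity, and near the other zeros of V, where V vanishes identically on S^3,
  because then all the data entering Q vanish.\<close>
lemma obstruction_zero_extends:
  assumes nonzero: "\<forall>g\<in>S3. V g \<noteq> 0 \<longrightarrow> Q V \<alpha> g = 0" and g0: "g0 \<in> S3"
  shows "Q V \<alpha> g0 = 0"
proof (cases "g0 \<in> closure {g\<in>S3. V g \<noteq> 0}")
  case True
  have "closed {g\<in>S3. Q V \<alpha> g = 0}"
    by (rule continuous_closed_preimage_constant)
       (use continuous_on_subset[OF continuous_on_Q] in auto, simp add: S3_def)
  moreover have "{g\<in>S3. V g \<noteq> 0} \<subseteq> {g\<in>S3. Q V \<alpha> g = 0}" using nonzero by blast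
  ultimately have "closure {g\<in>S3. V g \<noteq> 0} \<subseteq> {g\<in>S3. Q V \<alpha> g = 0}" using closure_minimal by blast
  then show ?thesis using True by blast
next
  case False
  then obtain e where e: "e > 0" and near: "\<forall>y\<in>S3. dist y g0 < e \<longrightarrow> V y = 0"
    unfolding closure_approachable by blast
  then have V0: "V g0 = 0" using g0 by simp
  have m0: "mc V a g0 = 0" for a
  proof -
    have "frechet_derivative V (at g0) (Efr a g0) = 0"
      using deriv_locally_constant_on_S3[OF g0 Efr_tangent smooth_differentiable[OF smooth_V] e]
        near V0 g0 by (simp add: S3_iff)
    then show ?thesis by (simp add: mc_def dderiv_def qmul_zero_right)
  qed
  have v0: "vc V g0 = 0" using vc_zero_iff[OF g0] V0 by simp
  show ?thesis unfolding Q_def obstruction_def m0 v0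
    by (simp add: skew3_def trace3_def mat3_def vec_eq_iff forall_3)
qed

lemma obstruction_zero_iff_equations:
  assumes unit: "\<forall>g\<in>S3. (\<alpha> g)\<^sup>2 + (norm (V g))\<^sup>2 = 1"
  shows "(\<forall>g\<in>S3. Q V \<alpha> g = 0) \<longleftrightarrow> (\<forall>g\<in>S3. equation_ii V \<alpha> g \<and> equation_iii V \<alpha> g)"
proof -
  have unit_g: "(\<alpha> g)\<^sup>2 + vc V g \<bullet> vc V g = 1" if "g \<in> S3" for g
    using unit that unit_coords by blast
  have "equation_ii V \<alpha> g \<and> equation_iii V \<alpha> g" if "g \<in> S3" "Q V \<alpha> g = 0" for g
    using obstruction_zero_imp_equations[OF unit_g unit_norm_derivative[OF unit]] that
    by (simp add: Q_def equation_ii_coords equation_iii_coords)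
  moreover have "Q V \<alpha> g = 0"
    if "g \<in> S3" "V g \<noteq> 0" "equation_ii V \<alpha> g" "equation_iii V \<alpha> g" for g
    using equations_imp_obstruction_zero[OF unit_g unit_norm_derivative[OF unit]] that
    by (simp add: Q_def equation_ii_coords equation_iii_coords vc_zero_iff)
  ultimately show ?thesis using obstruction_zero_extends by blast
qed

end

theorem proposition5p1:
  fixes V :: "quat \<Rightarrow> quat" and \<alpha> :: "quat \<Rightarrow> real"
  assumes "smooth_fun V" and "smooth_fun \<alpha>"
    and "\<forall>g\<in>S3. tangent g (V g)"
  defines "\<Psi> \<equiv> (\<lambda>g. cliff g (V g) (Phi g) + \<alpha> g *\<^sub>R Phi g)"
  shows "(gen_killing \<Psi> \<and> (\<forall>g\<in>S3. norm (\<Psi> g) = 1)) \<longleftrightarrow>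
    ((\<forall>g\<in>S3. (\<alpha> g)\<^sup>2 + (norm (V g))\<^sup>2 = 1)
   \<and> (\<forall>g\<in>S3. - interior2 g (V g) (hodge1 g (lc_nabla V g (V g)))
               - vderiv V \<alpha> g *\<^sub>R V g + \<alpha> g *\<^sub>R lc_nabla V g (V g) + dfun \<alpha> g = 0)
   \<and> (\<forall>g\<in>S3. \<alpha> g * hodge3 g (wedge12 (V g) (dvf V g))
               + (2 * \<alpha> g - codiff V g) * (1 - (\<alpha> g)\<^sup>2) + \<alpha> g * vderiv V \<alpha> g = 0))"
proof -
  note hyps = assms(3,1,2)
  have \<Psi>: "\<Psi> = spinor_of V \<alpha>" by (simp add: \<Psi>_def spinor_of_def fun_eq_iff)
  have "(\<forall>g\<in>S3. norm (\<Psi> g) = 1) \<longleftrightarrow> (\<forall>g\<in>S3. (\<alpha> g)\<^sup>2 + (norm (V g))\<^sup>2 = 1)"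
    using unit_norm_iff[OF hyps] by (simp add: \<Psi>)
  moreover have "gen_killing \<Psi> \<longleftrightarrow> (\<forall>g\<in>S3. equation_ii V \<alpha> g \<and> equation_iii V \<alpha> g)"
    if "\<forall>g\<in>S3. (\<alpha> g)\<^sup>2 + (norm (V g))\<^sup>2 = 1"
    using killing_iff_obstruction_zero[OF hyps that] obstruction_zero_iff_equations[OF hyps that]
    by (simp add: \<Psi>)
  ultimately show ?thesis unfolding equation_ii_def equation_iii_def by blast
qed

end
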